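(* Let $Z_{C_2}$ be the set of $\boldsymbol{x}\in\mathbb{R}^n$ for which there exist $\lambda\ge0$, $\alpha_t\ge0$, $s_i\ge0$, $\boldsymbol{z}_{it}\in\mathbb{R}^m$ ($i\in[N],t\in[T]$) with $\lambda\delta+\frac1N\sum_{i=1}^Ns_i\le\epsilon$, $G_{f_t}(\boldsymbol{z}_{it},\alpha_t,\boldsymbol{x})+1-\boldsymbol{z}_{it}^{\top}\boldsymbol{\zeta}^i-s_i\le0$ and $\|\boldsymbol{z}_{it}\|_*\le\lambda$ for all $i\in[N],t\in[T]$. Let $\tilde Z_{C_2}$ be the set of $\boldsymbol{x}\in\mathbb{R}^n$ for which there exist $\alpha_t>0$, $q_{it}\ge0$ and $\boldsymbol{v}_{it}\in\mathbb{R}^m$ ($i\in[N],t\in[T]$) such that for all $i\in[N],t\in[T]$: $$\|\boldsymbol{v}_{it}\|_*\delta+\frac1N\sum_{j=1}^Nq_{jt}\le\epsilon\alpha_t,\qquad G_{f_t}(\boldsymbol{v}_{it},1,\boldsymbol{x})+\alpha_t-\boldsymbol{v}_{it}^{\top}\boldsymbol{\zeta}^i-q_{it}\le0.$$ Then $Z_{C_2}\subseteq\tilde Z_{C_2}$, and $\tilde Z_{C_2}$ is a convex set.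
   Context: Here $G_{f_t}(\boldsymbol{z},\alpha,\boldsymbol{x})=\sup_{\boldsymbol{\xi}\in\Xi}[\boldsymbol{z}^{\top}\boldsymbol{\xi}-\alpha f_t(\boldsymbol{x},\boldsymbol{\xi})]$. Setting: $\epsilon\in(0,1)$, $\delta>0$, $[T]=\{1,\dots,T\}$; $\Xi\subseteq\mathbb{R}^m$ nonempty closed convex; each $f_t:\mathbb{R}^n\times\Xi\to\mathbb{R}$ convex continuous in $\boldsymbol{\xi}$ for fixed $\boldsymbol{x}$ and concave continuous in $\boldsymbol{x}$ for fixed $\boldsymbol{\xi}$; $\boldsymbol{\zeta}^1,\dots,\boldsymbol{\zeta}^N\in\Xi$ given samples; $\|\cdot\|_*$ is the dual norm of a norm $\|\cdot\|$ on $\mathbb{R}^m$. *)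

theory Defs
  imports "HOL-Analysis.Analysis" "HOL-Library.Extended_Real"
begin

definition is_norm :: "('a::real_vector \<Rightarrow> real) \<Rightarrow> bool" where
  "is_norm nrm \<longleftrightarrow>
     (\<forall>x. 0 \<le> nrm x) \<and> (\<forall>x. nrm x = 0 \<longleftrightarrow> x = 0) \<and>
     (\<forall>c x. nrm (c *\<^sub>R x) = \<bar>c\<bar> * nrm x) \<and>
     (\<forall>x y. nrm (x + y) \<le> nrm x + nrm y)"

definition dual_norm :: "('a::real_inner \<Rightarrow> real) \<Rightarrow> 'a \<Rightarrow> real" where
  "dual_norm nrm z = Sup {z \<bullet> \<xi> | \<xi>. nrm \<xi> \<le> 1}"

definition G_fun :: "('x \<Rightarrow> 'a::real_inner \<Rightarrow> real) \<Rightarrow> 'a set \<Rightarrow> 'a \<Rightarrow> real \<Rightarrow> 'x \<Rightarrow> ereal" where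
  "G_fun f \<Xi> z \<alpha> x = (SUP \<xi>\<in>\<Xi>. ereal (z \<bullet> \<xi> - \<alpha> * f x \<xi>))"

definition Z_C2 ::
  "real \<Rightarrow> real \<Rightarrow> nat \<Rightarrow> nat \<Rightarrow> (nat \<Rightarrow> real^'n \<Rightarrow> real^'m \<Rightarrow> real) \<Rightarrow> (real^'m) set
    \<Rightarrow> (nat \<Rightarrow> real^'m) \<Rightarrow> (real^'m \<Rightarrow> real) \<Rightarrow> (real^'n) set" where
  "Z_C2 \<epsilon> \<delta> N T f \<Xi> \<zeta> nrm =
     {x. \<exists>(lam::real) (\<alpha>::nat \<Rightarrow> real) (s::nat \<Rightarrow> real) (z::nat \<Rightarrow> nat \<Rightarrow> real^'m).
        0 \<le> lam \<and> (\<forall>t\<in>{1..T}. 0 \<le> \<alpha> t) \<and> (\<forall>i\<in>{1..N}. 0 \<le> s i) \<and>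
        lam * \<delta> + (1 / real N) * (\<Sum>i=1..N. s i) \<le> \<epsilon> \<and>
        (\<forall>i\<in>{1..N}. \<forall>t\<in>{1..T}.
            G_fun (f t) \<Xi> (z i t) (\<alpha> t) x + ereal (1 - z i t \<bullet> \<zeta> i - s i) \<le> 0 \<and>
            dual_norm nrm (z i t) \<le> lam)}"

definition Z_C2_tilde ::
  "real \<Rightarrow> real \<Rightarrow> nat \<Rightarrow> nat \<Rightarrow> (nat \<Rightarrow> real^'n \<Rightarrow> real^'m \<Rightarrow> real) \<Rightarrow> (real^'m) set
    \<Rightarrow> (nat \<Rightarrow> real^'m) \<Rightarrow> (real^'m \<Rightarrow> real) \<Rightarrow> (real^'n) set" where
  "Z_C2_tilde \<epsilon> \<delta> N T f \<Xi> \<zeta> nrm =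
     {x. \<exists>(\<alpha>::nat \<Rightarrow> real) (q::nat \<Rightarrow> nat \<Rightarrow> real) (v::nat \<Rightarrow> nat \<Rightarrow> real^'m).
        (\<forall>t\<in>{1..T}. 0 < \<alpha> t) \<and> (\<forall>i\<in>{1..N}. \<forall>t\<in>{1..T}. 0 \<le> q i t) \<and>
        (\<forall>i\<in>{1..N}. \<forall>t\<in>{1..T}.
            dual_norm nrm (v i t) * \<delta> + (1 / real N) * (\<Sum>j=1..N. q j t) \<le> \<epsilon> * \<alpha> t \<and>
            G_fun (f t) \<Xi> (v i t) 1 x + ereal (\<alpha> t - v i t \<bullet> \<zeta> i - q i t) \<le> 0)}"

end

theory Submission imports Defs begin

text \<open>If a certificate for \<open>Z_C2\<close> had \<open>\<alpha> t = 0\<close>, its \<open>(i,t)\<close> constraint at \<open>\<xi> = \<zeta> i \<in> \<Xi>\<close>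
  would force \<open>s i \<ge> 1\<close> for every \<open>i\<close>, whence \<open>lam * \<delta> + (1/N) \<Sum>\<^sub>i s i \<ge> 1 > \<epsilon>\<close>. So all
  weights are positive, and dividing the \<open>t\<close>-th constraints by \<open>\<alpha> t\<close> yields a certificate for
  \<open>Z_C2_tilde\<close> with \<open>v i t = z i t / \<alpha> t\<close>, \<open>q i t = s i / \<alpha> t\<close> and weights \<open>1 / \<alpha> t\<close>.
  The constraints of \<open>Z_C2_tilde\<close> are jointly convex in \<open>(x, \<alpha>, q, v)\<close>: the dual norm is
  sublinear, and \<open>G_f(v, 1, x)\<close> is a supremum of functions linear in \<open>v\<close> and convex in \<open>x\<close>
  (\<open>f\<close> being concave in \<open>x\<close>). Hence convex combinations of certificates certify convex
  combinations of points.\<close>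

lemma is_normD:
  assumes "is_norm nrm"
  shows "nrm x \<ge> 0" "nrm x = 0 \<longleftrightarrow> x = 0" "nrm (c *\<^sub>R x) = \<bar>c\<bar> * nrm x"
    "nrm (x + y) \<le> nrm x + nrm y"
  using assms unfolding is_norm_def by auto

lemma is_norm_convex_on:
  assumes "is_norm nrm"
  shows "convex_on UNIV nrm"
proof (rule convex_onI)
  fix t :: real and x y assume t: "0 < t" "t < 1"
  have "nrm ((1 - t) *\<^sub>R x + t *\<^sub>R y) \<le> nrm ((1 - t) *\<^sub>R x) + nrm (t *\<^sub>R y)"
    by (rule is_normD(4)[OF assms])
  also have "\<dots> = (1 - t) * nrm x + t * nrm y"
    using t by (simp add: is_normD(3)[OF assms])
  finally show "nrm ((1 - t) *\<^sub>R x + t *\<^sub>R y) \<le> (1 - t) * nrm x + t * nrm y" .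
qed simp

lemma is_norm_ge_scaled_norm:
  fixes nrm :: "'a::euclidean_space \<Rightarrow> real"
  assumes "is_norm nrm"
  obtains m where "m > 0" "\<And>x. m * norm x \<le> nrm x"
proof -
  have "continuous_on (sphere 0 1) nrm"
    using convex_on_continuous[OF open_UNIV is_norm_convex_on[OF assms]]
    by (rule continuous_on_subset) simp
  moreover have "sphere (0::'a) 1 \<noteq> {}"
    by simp
  ultimately obtain x0 where x0: "x0 \<in> sphere 0 1" and min: "\<And>y. y \<in> sphere 0 1 \<Longrightarrow> nrm x0 \<le> nrm y"
    using continuous_attains_inf[OF compact_sphere] by blast
  have "nrm x0 > 0"
    using is_normD(1,2)[OF assms, of x0] x0 by fastforce
  moreover have "nrm x0 * norm x \<le> nrm x" for x
  proof (cases "x = 0")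
    case False
    have "nrm x = norm x * nrm ((1 / norm x) *\<^sub>R x)"
      using False by (simp add: is_normD(3)[OF assms])
    moreover have "nrm x0 \<le> nrm ((1 / norm x) *\<^sub>R x)"
      using False by (intro min) simp
    ultimately show ?thesis
      by (simp add: mult.commute mult_left_mono)
  qed (simp add: is_normD(1)[OF assms])
  ultimately show thesis
    using that by blast
qed

lemma bdd_above_dual_norm_set:
  fixes nrm :: "'a::euclidean_space \<Rightarrow> real"
  assumes "is_norm nrm"
  shows "bdd_above {z \<bullet> \<xi> | \<xi>. nrm \<xi> \<le> 1}"
proof -
  obtain m where m: "m > 0" "\<And>x. m * norm x \<le> nrm x"
    using is_norm_ge_scaled_norm[OF assms] by blast
  have "z \<bullet> \<xi> \<le> norm z / m" if "nrm \<xi> \<le> 1" for \<xi>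
  proof -
    have "m * norm \<xi> \<le> 1"
      using m(2) that by (rule order_trans)
    then have "norm \<xi> \<le> 1 / m"
      using m(1) by (simp add: field_simps mult.commute)
    then have "norm z * norm \<xi> \<le> norm z / m"
      by (metis mult_left_mono norm_ge_zero times_divide_eq_right mult.right_neutral)
    then show ?thesis
      using norm_cauchy_schwarz[of z \<xi>] by linarith
  qed
  then show ?thesis
    unfolding bdd_above_def by blast
qed

lemma inner_le_dual_norm:
  fixes nrm :: "'a::euclidean_space \<Rightarrow> real"
  assumes "is_norm nrm" and "nrm \<xi> \<le> 1"
  shows "z \<bullet> \<xi> \<le> dual_norm nrm z"
  unfolding dual_norm_def
  using assms(2) by (intro cSup_upper[OF _ bdd_above_dual_norm_set[OF assms(1)]]) blast

lemma dual_norm_le: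
  assumes "is_norm nrm" and "\<And>\<xi>. nrm \<xi> \<le> 1 \<Longrightarrow> z \<bullet> \<xi> \<le> b"
  shows "dual_norm nrm z \<le> b"
  unfolding dual_norm_def
proof (rule cSup_least)
  have "nrm 0 \<le> 1"
    using is_normD(2)[OF assms(1), of 0] by simp
  then show "{z \<bullet> \<xi> |\<xi>. nrm \<xi> \<le> 1} \<noteq> {}"
    by blast
qed (use assms(2) in blast)

lemma dual_norm_scaleR_le:
  fixes nrm :: "'a::euclidean_space \<Rightarrow> real"
  assumes "is_norm nrm" and "c \<ge> 0"
  shows "dual_norm nrm (c *\<^sub>R z) \<le> c * dual_norm nrm z"
  using assms(1)
proof (rule dual_norm_le)
  fix \<xi> assume "nrm \<xi> \<le> 1"
  then show "c *\<^sub>R z \<bullet> \<xi> \<le> c * dual_norm nrm z"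
    using inner_le_dual_norm[OF assms(1)] assms(2) by (simp add: mult_left_mono)
qed

lemma dual_norm_triangle:
  fixes nrm :: "'a::euclidean_space \<Rightarrow> real"
  assumes "is_norm nrm"
  shows "dual_norm nrm (u + w) \<le> dual_norm nrm u + dual_norm nrm w"
  using assms
proof (rule dual_norm_le)
  fix \<xi> assume "nrm \<xi> \<le> 1"
  then show "(u + w) \<bullet> \<xi> \<le> dual_norm nrm u + dual_norm nrm w"
    using inner_le_dual_norm[OF assms] by (simp add: inner_add_left add_mono)
qed

lemma dual_norm_scaleR_add_le:
  fixes nrm :: "'a::euclidean_space \<Rightarrow> real"
  assumes "is_norm nrm" and "0 \<le> u" "0 \<le> v"
  shows "dual_norm nrm (u *\<^sub>R x + v *\<^sub>R y) \<le> u * dual_norm nrm x + v * dual_norm nrm y"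
  using dual_norm_triangle[OF assms(1), of "u *\<^sub>R x" "v *\<^sub>R y"]
    dual_norm_scaleR_le[OF assms(1,2), of x] dual_norm_scaleR_le[OF assms(1,3), of y]
  by linarith

lemma G_fun_add_le_zero_iff:
  "G_fun f \<Xi> v a x + ereal c \<le> 0 \<longleftrightarrow> (\<forall>\<xi>\<in>\<Xi>. v \<bullet> \<xi> - a * f x \<xi> + c \<le> 0)"
proof -
  have "G_fun f \<Xi> v a x + ereal c \<le> 0 \<longleftrightarrow> G_fun f \<Xi> v a x \<le> ereal (- c)"
    by (cases "G_fun f \<Xi> v a x") auto
  also have "\<dots> \<longleftrightarrow> (\<forall>\<xi>\<in>\<Xi>. v \<bullet> \<xi> - a * f x \<xi> + c \<le> 0)"
    unfolding G_fun_def SUP_le_iff by auto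
  finally show ?thesis .
qed

lemma Z_C2_subset_Z_C2_tilde:
  assumes nrm: "is_norm nrm" and eps: "\<epsilon> < 1" and delta: "0 \<le> \<delta>"
    and samples: "\<And>i. i \<in> {1..N} \<Longrightarrow> \<zeta> i \<in> \<Xi>"
  shows "Z_C2 \<epsilon> \<delta> N T f \<Xi> \<zeta> nrm \<subseteq> Z_C2_tilde \<epsilon> \<delta> N T f \<Xi> \<zeta> nrm"
proof
  fix x assume "x \<in> Z_C2 \<epsilon> \<delta> N T f \<Xi> \<zeta> nrm"
  then obtain lam \<alpha> s z where lam: "0 \<le> lam" and \<alpha>: "\<forall>t\<in>{1..T}. 0 \<le> \<alpha> t"
    and s: "\<forall>i\<in>{1..N}. 0 \<le> s i"
    and budget: "lam * \<delta> + (1 / real N) * (\<Sum>i=1..N. s i) \<le> \<epsilon>"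
    and G: "\<And>i t \<xi>. i \<in> {1..N} \<Longrightarrow> t \<in> {1..T} \<Longrightarrow> \<xi> \<in> \<Xi> \<Longrightarrow>
              z i t \<bullet> \<xi> - \<alpha> t * f t x \<xi> + (1 - z i t \<bullet> \<zeta> i - s i) \<le> 0"
    and z: "\<And>i t. i \<in> {1..N} \<Longrightarrow> t \<in> {1..T} \<Longrightarrow> dual_norm nrm (z i t) \<le> lam"
    unfolding Z_C2_def G_fun_add_le_zero_iff by blast
  show "x \<in> Z_C2_tilde \<epsilon> \<delta> N T f \<Xi> \<zeta> nrm"
  proof (cases "N = 0")
    case True
    then show ?thesis
      unfolding Z_C2_tilde_def by (intro CollectI exI[of _ "\<lambda>t. 1"]) auto
  next
    case False
    have \<alpha>_pos: "0 < \<alpha> t" if t: "t \<in> {1..T}" for t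
    proof (rule ccontr)
      assume "\<not> 0 < \<alpha> t"
      then have "\<alpha> t = 0"
        using \<alpha> t by force
      then have "1 \<le> s i" if "i \<in> {1..N}" for i
        using G[OF that t samples[OF that]] by simp
      then have "real N \<le> (\<Sum>i=1..N. s i)"
        using sum_mono[of "{1..N}" "\<lambda>_. 1" s] by simp
      then have "1 \<le> (1 / real N) * (\<Sum>i=1..N. s i)"
        using False by (simp add: field_simps)
      moreover have "0 \<le> lam * \<delta>"
        using lam delta by simp
      ultimately show False
        using budget eps by linarith
    qed
    show ?thesis
      unfolding Z_C2_tilde_def G_fun_add_le_zero_iff
    proof (intro CollectI exI[of _ "\<lambda>t. 1 / \<alpha> t"] exI[of _ "\<lambda>i t. s i / \<alpha> t"]
        exI[of _ "\<lambda>i t. (1 / \<alpha> t) *\<^sub>R z i t"] conjI ballI)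
      fix i t assume i: "i \<in> {1..N}" and t: "t \<in> {1..T}"
      have a: "0 < \<alpha> t"
        using \<alpha>_pos[OF t] .
      show "0 \<le> s i / \<alpha> t"
        using a s i by simp
      have "dual_norm nrm ((1 / \<alpha> t) *\<^sub>R z i t) \<le> (1 / \<alpha> t) * dual_norm nrm (z i t)"
        using a by (intro dual_norm_scaleR_le[OF nrm]) simp
      also have "\<dots> \<le> (1 / \<alpha> t) * lam"
        using z[OF i t] a by (intro mult_left_mono) auto
      finally have "dual_norm nrm ((1 / \<alpha> t) *\<^sub>R z i t) * \<delta> \<le> (1 / \<alpha> t) * lam * \<delta>"
        using delta by (rule mult_right_mono)
      then have "dual_norm nrm ((1 / \<alpha> t) *\<^sub>R z i t) * \<delta> + 1 / real N * (\<Sum>j=1..N. s j / \<alpha> t)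
          \<le> (1 / \<alpha> t) * (lam * \<delta> + (1 / real N) * (\<Sum>j=1..N. s j))"
        by (simp add: algebra_simps sum_divide_distrib)
      also have "\<dots> \<le> \<epsilon> * (1 / \<alpha> t)"
        using budget a by (simp add: mult.commute divide_right_mono)
      finally show "dual_norm nrm ((1 / \<alpha> t) *\<^sub>R z i t) * \<delta> + 1 / real N * (\<Sum>j=1..N. s j / \<alpha> t)
          \<le> \<epsilon> * (1 / \<alpha> t)" .
      fix \<xi> assume "\<xi> \<in> \<Xi>"
      have "(1 / \<alpha> t) *\<^sub>R z i t \<bullet> \<xi> - 1 * f t x \<xi> + (1 / \<alpha> t - (1 / \<alpha> t) *\<^sub>R z i t \<bullet> \<zeta> i - s i / \<alpha> t)
          = (z i t \<bullet> \<xi> - \<alpha> t * f t x \<xi> + (1 - z i t \<bullet> \<zeta> i - s i)) / \<alpha> t"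
        using a by (simp add: field_simps)
      also have "\<dots> \<le> 0"
        using G[OF i t \<open>\<xi> \<in> \<Xi>\<close>] a by (simp add: divide_nonpos_pos)
      finally show "(1 / \<alpha> t) *\<^sub>R z i t \<bullet> \<xi> - 1 * f t x \<xi>
          + (1 / \<alpha> t - (1 / \<alpha> t) *\<^sub>R z i t \<bullet> \<zeta> i - s i / \<alpha> t) \<le> 0" .
    qed (use \<alpha>_pos in simp)
  qed
qed

lemma convex_Z_C2_tilde:
  assumes nrm: "is_norm nrm" and delta: "0 \<le> \<delta>"
    and concave: "\<And>t \<xi>. t \<in> {1..T} \<Longrightarrow> \<xi> \<in> \<Xi> \<Longrightarrow> concave_on UNIV (\<lambda>x. f t x \<xi>)"
  shows "convex (Z_C2_tilde \<epsilon> \<delta> N T f \<Xi> \<zeta> nrm)"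
proof (rule convexI)
  fix x1 x2 and u v :: real
  assume x1: "x1 \<in> Z_C2_tilde \<epsilon> \<delta> N T f \<Xi> \<zeta> nrm" and x2: "x2 \<in> Z_C2_tilde \<epsilon> \<delta> N T f \<Xi> \<zeta> nrm"
    and uv: "0 \<le> u" "0 \<le> v" "u + v = 1"
  obtain a1 q1 v1 where a1: "\<forall>t\<in>{1..T}. 0 < a1 t" and q1: "\<forall>i\<in>{1..N}. \<forall>t\<in>{1..T}. 0 \<le> q1 i t"
    and c1: "\<forall>i\<in>{1..N}. \<forall>t\<in>{1..T}.
      dual_norm nrm (v1 i t) * \<delta> + (1 / real N) * (\<Sum>j=1..N. q1 j t) \<le> \<epsilon> * a1 t \<and>
      (\<forall>\<xi>\<in>\<Xi>. v1 i t \<bullet> \<xi> - 1 * f t x1 \<xi> + (a1 t - v1 i t \<bullet> \<zeta> i - q1 i t) \<le> 0)"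
    using x1 unfolding Z_C2_tilde_def G_fun_add_le_zero_iff by blast
  obtain a2 q2 v2 where a2: "\<forall>t\<in>{1..T}. 0 < a2 t" and q2: "\<forall>i\<in>{1..N}. \<forall>t\<in>{1..T}. 0 \<le> q2 i t"
    and c2: "\<forall>i\<in>{1..N}. \<forall>t\<in>{1..T}.
      dual_norm nrm (v2 i t) * \<delta> + (1 / real N) * (\<Sum>j=1..N. q2 j t) \<le> \<epsilon> * a2 t \<and>
      (\<forall>\<xi>\<in>\<Xi>. v2 i t \<bullet> \<xi> - 1 * f t x2 \<xi> + (a2 t - v2 i t \<bullet> \<zeta> i - q2 i t) \<le> 0)"
    using x2 unfolding Z_C2_tilde_def G_fun_add_le_zero_iff by blast
  show "u *\<^sub>R x1 + v *\<^sub>R x2 \<in> Z_C2_tilde \<epsilon> \<delta> N T f \<Xi> \<zeta> nrm"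
    unfolding Z_C2_tilde_def G_fun_add_le_zero_iff
  proof (intro CollectI exI[of _ "\<lambda>t. u * a1 t + v * a2 t"]
      exI[of _ "\<lambda>i t. u * q1 i t + v * q2 i t"] exI[of _ "\<lambda>i t. u *\<^sub>R v1 i t + v *\<^sub>R v2 i t"]
      conjI ballI)
    fix t assume t: "t \<in> {1..T}"
    have "0 < a1 t" "0 < a2 t"
      using a1 a2 t by auto
    then show "0 < u * a1 t + v * a2 t"
      using uv by (cases "u = 0") (auto intro!: add_pos_nonneg mult_pos_pos)
    fix i assume i: "i \<in> {1..N}"
    show "0 \<le> u * q1 i t + v * q2 i t"
      using q1 q2 i t uv by simp
  next
    fix i t assume i: "i \<in> {1..N}" and t: "t \<in> {1..T}"
    have "dual_norm nrm (u *\<^sub>R v1 i t + v *\<^sub>R v2 i t) * \<delta>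
        \<le> u * (dual_norm nrm (v1 i t) * \<delta>) + v * (dual_norm nrm (v2 i t) * \<delta>)"
      using mult_right_mono[OF dual_norm_scaleR_add_le[OF nrm uv(1,2)] delta]
      by (simp add: algebra_simps)
    moreover have "u * (dual_norm nrm (v1 i t) * \<delta> + (1 / real N) * (\<Sum>j=1..N. q1 j t)) \<le> u * (\<epsilon> * a1 t)"
      using c1 i t uv(1) by (simp add: mult_left_mono)
    moreover have "v * (dual_norm nrm (v2 i t) * \<delta> + (1 / real N) * (\<Sum>j=1..N. q2 j t)) \<le> v * (\<epsilon> * a2 t)"
      using c2 i t uv(2) by (simp add: mult_left_mono)
    ultimately show "dual_norm nrm (u *\<^sub>R v1 i t + v *\<^sub>R v2 i t) * \<delta>
        + 1 / real N * (\<Sum>j=1..N. u * q1 j t + v * q2 j t) \<le> \<epsilon> * (u * a1 t + v * a2 t)"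
      by (simp add: sum.distrib sum_distrib_left algebra_simps)
    fix \<xi> assume \<xi>: "\<xi> \<in> \<Xi>"
    have "u * f t x1 \<xi> + v * f t x2 \<xi> \<le> f t (u *\<^sub>R x1 + v *\<^sub>R x2) \<xi>"
      using concave[OF t \<xi>] uv unfolding concave_on_iff by blast
    moreover have "u * (v1 i t \<bullet> \<xi> - 1 * f t x1 \<xi> + (a1 t - v1 i t \<bullet> \<zeta> i - q1 i t)) \<le> 0"
      using c1 i t \<xi> uv(1) by (simp add: mult_nonneg_nonpos)
    moreover have "v * (v2 i t \<bullet> \<xi> - 1 * f t x2 \<xi> + (a2 t - v2 i t \<bullet> \<zeta> i - q2 i t)) \<le> 0"
      using c2 i t \<xi> uv(2) by (simp add: mult_nonneg_nonpos)
    ultimately show "(u *\<^sub>R v1 i t + v *\<^sub>R v2 i t) \<bullet> \<xi> - 1 * f t (u *\<^sub>R x1 + v *\<^sub>R x2) \<xi>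
        + (u * a1 t + v * a2 t - (u *\<^sub>R v1 i t + v *\<^sub>R v2 i t) \<bullet> \<zeta> i - (u * q1 i t + v * q2 i t)) \<le> 0"
      by (simp add: inner_add_left algebra_simps)
  qed
qed

theorem theorem2:
  fixes \<epsilon> \<delta> :: real and N T :: nat
    and f :: "nat \<Rightarrow> real^'n \<Rightarrow> real^'m \<Rightarrow> real"
    and \<Xi> :: "(real^'m) set" and \<zeta> :: "nat \<Rightarrow> real^'m"
    and nrm :: "real^'m \<Rightarrow> real"
  assumes eps: "0 < \<epsilon>" "\<epsilon> < 1"
    and delta: "0 < \<delta>"
    and Xi: "\<Xi> \<noteq> {}" "closed \<Xi>" "convex \<Xi>"
    and f_xi: "\<And>t x. t \<in> {1..T} \<Longrightarrow> convex_on \<Xi> (f t x) \<and> continuous_on \<Xi> (f t x)"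
    and f_x: "\<And>t \<xi>. t \<in> {1..T} \<Longrightarrow> \<xi> \<in> \<Xi> \<Longrightarrow>
               concave_on UNIV (\<lambda>x. f t x \<xi>) \<and> continuous_on UNIV (\<lambda>x. f t x \<xi>)"
    and samples: "\<And>i. i \<in> {1..N} \<Longrightarrow> \<zeta> i \<in> \<Xi>"
    and nrm: "is_norm nrm"
  shows "Z_C2 \<epsilon> \<delta> N T f \<Xi> \<zeta> nrm \<subseteq> Z_C2_tilde \<epsilon> \<delta> N T f \<Xi> \<zeta> nrm
         \<and> convex (Z_C2_tilde \<epsilon> \<delta> N T f \<Xi> \<zeta> nrm)"
proof
  show "Z_C2 \<epsilon> \<delta> N T f \<Xi> \<zeta> nrm \<subseteq> Z_C2_tilde \<epsilon> \<delta> N T f \<Xi> \<zeta> nrm"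
    using nrm eps(2) delta samples by (intro Z_C2_subset_Z_C2_tilde) auto
  show "convex (Z_C2_tilde \<epsilon> \<delta> N T f \<Xi> \<zeta> nrm)"
    using nrm delta f_x by (intro convex_Z_C2_tilde) auto
qed

end
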